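(* Let $n\ge 3$ and let $\zeta':\mathrm{TVB}_n\to\mathrm{GL}_{n+1}(\mathbb{C})$ be a complex homogeneous local representation of $\mathrm{TVB}_n$. Then $\zeta'$ is equivalent to one of the following seven representations, described by giving $2\times 2$ matrices $S,R,G$ such that $\zeta'(\sigma_i)=L_i(S)$, $\zeta'(\rho_i)=L_i(R)$ for $1\le i\le n-1$ and $\zeta'(\gamma_j)=L_j(G)$ for $1\le j\le n$: \begin{itemize} \item[(1)] $\zeta'_1$: $S=\begin{pmatrix}0&b\\ c&0\end{pmatrix}$, $R=\begin{pmatrix}0&-\frac{\sqrt b}{\sqrt c}\\ -\frac{\sqrt c}{\sqrt b}&0\end{pmatrix}$, $G=\begin{pmatrix}-1&0\\0&1\end{pmatrix}$, where $b,c\in\mathbb{C}^*$. \item[(2)] $\zeta'_2$: $S=\begin{pmatrix}0&b\\ c&0\end{pmatrix}$, $R=\begin{pmatrix}0&\frac{\sqrt b}{\sqrt c}\\ \frac{\sqrt c}{\sqrt b}&0\end{pmatrix}$, $G=\begin{pmatrix}-1&0\\0&1\end{pmatrix}$, where $b,c\in\mathbb{C}^*$. \item[(3)] $\zeta'_3$: $S=\begin{pmatrix}0&b\\ c&0\end{pmatrix}$, $R=\begin{pmatrix}0&-\frac{\sqrt b}{\sqrt c}\\ -\frac{\sqrt c}{\sqrt b}&0\end{pmatrix}$, $G=I_2$ (so $\zeta'_3(\gamma_j)=I_{n+1}$), where $b,c\in\mathbb{C}^*$. \item[(4)] $\zeta'_4$: $S=\begin{pmatrix}0&b\\ c&0\end{pmatrix}$,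 $R=\begin{pmatrix}0&\frac{\sqrt b}{\sqrt c}\\ \frac{\sqrt c}{\sqrt b}&0\end{pmatrix}$, $G=I_2$, where $b,c\in\mathbb{C}^*$. \item[(5)] $\zeta'_5$: $S=I_2$ (so $\zeta'_5(\sigma_i)=I_{n+1}$), $R=\begin{pmatrix}0&x\\ \frac1x&0\end{pmatrix}$, $G=\begin{pmatrix}-1&0\\0&1\end{pmatrix}$, where $x\in\mathbb{C}^*$. \item[(6)] $\zeta'_6$: $S=I_2$, $R=\begin{pmatrix}0&x\\ \frac1x&0\end{pmatrix}$, $G=I_2$, where $x\in\mathbb{C}^*$. \item[(7)] $\zeta'_7$: $S=R=G=I_2$, i.e. $\zeta'_7(\sigma_i)=\zeta'_7(\rho_i)=\zeta'_7(\gamma_j)=I_{n+1}$. \end{itemize} Here $\mathbb{C}^*=\mathbb{C}\setminus\{0\}$ and $\sqrt b,\sqrt c$ denote square roots of $b,c$.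
   Context: For $n\ge 2$, the twisted virtual braid group $\mathrm{TVB}_n$ is the group with generators $\sigma_1,\dots,\sigma_{n-1}$, $\rho_1,\dots,\rho_{n-1}$, $\gamma_1,\dots,\gamma_n$ and defining relations: $\sigma_i\sigma_{i+1}\sigma_i=\sigma_{i+1}\sigma_i\sigma_{i+1}$ ($1\le i\le n-2$); $\sigma_i\sigma_j=\sigma_j\sigma_i$ ($|i-j|\ge2$); $\rho_i^2=1$; $\rho_i\rho_j=\rho_j\rho_i$ ($|i-j|\ge 2$); $\rho_i\rho_{i+1}\rho_i=\rho_{i+1}\rho_i\rho_{i+1}$ ($1\le i\le n-2$); $\sigma_i\rho_j=\rho_j\sigma_i$ ($|i-j|\ge 2$); $\rho_i\rho_{i+1}\sigma_i=\sigma_{i+1}\rho_i\rho_{i+1}$ ($1\le i\le n-2$); $\gamma_i^2=1$ ($1\le i\le n$); $\gamma_i\gamma_j=\gamma_j\gamma_i$ (all $i,j$); $\gamma_j\rho_i=\rho_i\gamma_j$ and $\gamma_j\sigma_i=\sigma_i\gamma_j$ ($|i-j|\ge 2$); $\rho_i\gamma_i=\gamma_{i+1}\rho_i$ ($1\le i\le n-1$); $\rho_i\sigma_i\rho_i=\gamma_{i+1}\gamma_i\sigma_i\gamma_i\gamma_{i+1}$ ($1\le i\le n-1$). For a $2\times2$ matrix $M$ and $1\le i\le n$, let $L_i(M)$ be the $(n+1)\times(n+1)$ block-diagonal matrix $\mathrm{diag}(I_{i-1},M,I_{n-i})$. A complex homogeneous local representation $\zeta':\mathrm{TVB}_n\to\mathrm{GL}_{n+1}(\mathbb{C})$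 is a group homomorphism such that there exist $S,R,G\in\mathrm{GL}_2(\mathbb{C})$ with $\zeta'(\sigma_i)=L_i(S)$, $\zeta'(\rho_i)=L_i(R)$ for all $1\le i\le n-1$, and $\zeta'(\gamma_j)=L_j(G)$ for all $1\le j\le n$. Two representations are equivalent if they are conjugate by a fixed invertible matrix. *)

theory Defs
  imports Complex_Main "Jordan_Normal_Form.Matrix"
begin

definition mat2 :: "complex \<Rightarrow> complex \<Rightarrow> complex \<Rightarrow> complex \<Rightarrow> complex mat" where
  "mat2 a b c d = mat_of_rows_list 2 [[a, b], [c, d]]"

text \<open>L n i M = diag(I_(i-1), M, I_(n-i)), an (n+1)x(n+1) matrix; i is 1-based,
  so M occupies the (0-based) rows/columns i-1 and i.\<close>
definition Lmat :: "nat \<Rightarrow> nat \<Rightarrow> complex mat \<Rightarrow> complex mat" where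
  "Lmat n i M = mat (n+1) (n+1) (\<lambda>(r, c).
     if (r = i - 1 \<or> r = i) \<and> (c = i - 1 \<or> c = i) then M $$ (r - (i - 1), c - (i - 1))
     else if r = c then 1 else 0)"

text \<open>(S,R,G) in GL_2(C) define a homogeneous local representation of TVB_n, i.e. the
  assignment sigma_i |-> L_i(S), rho_i |-> L_i(R), gamma_j |-> L_j(G) respects all defining
  relations of TVB_n (equivalently, by von Dyck, extends to a group homomorphism).\<close>
definition homog_local_rep :: "nat \<Rightarrow> complex mat \<Rightarrow> complex mat \<Rightarrow> complex mat \<Rightarrow> bool" where
  "homog_local_rep n S R G \<longleftrightarrow>
     S \<in> carrier_mat 2 2 \<and> R \<in> carrier_mat 2 2 \<and> G \<in> carrier_mat 2 2 \<and>
     invertible_mat S \<and> invertible_mat R \<and> invertible_mat G \<and>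
     (let A = (\<lambda>i. Lmat n i S); B = (\<lambda>i. Lmat n i R); C = (\<lambda>j. Lmat n j G);
          I = (1\<^sub>m (n+1) :: complex mat) in
     (\<forall>i. 1 \<le> i \<and> i \<le> n - 2 \<longrightarrow> A i * A (i+1) * A i = A (i+1) * A i * A (i+1)) \<and>
     (\<forall>i j. 1 \<le> i \<and> i \<le> n - 1 \<and> 1 \<le> j \<and> j \<le> n - 1 \<and> (i + 2 \<le> j \<or> j + 2 \<le> i)
          \<longrightarrow> A i * A j = A j * A i) \<and>
     (\<forall>i. 1 \<le> i \<and> i \<le> n - 1 \<longrightarrow> B i * B i = I) \<and>
     (\<forall>i j. 1 \<le> i \<and> i \<le> n - 1 \<and> 1 \<le> j \<and> j \<le> n - 1 \<and> (i + 2 \<le> j \<or> j + 2 \<le> i)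
          \<longrightarrow> B i * B j = B j * B i) \<and>
     (\<forall>i. 1 \<le> i \<and> i \<le> n - 2 \<longrightarrow> B i * B (i+1) * B i = B (i+1) * B i * B (i+1)) \<and>
     (\<forall>i j. 1 \<le> i \<and> i \<le> n - 1 \<and> 1 \<le> j \<and> j \<le> n - 1 \<and> (i + 2 \<le> j \<or> j + 2 \<le> i)
          \<longrightarrow> A i * B j = B j * A i) \<and>
     (\<forall>i. 1 \<le> i \<and> i \<le> n - 2 \<longrightarrow> B i * B (i+1) * A i = A (i+1) * B i * B (i+1)) \<and>
     (\<forall>i. 1 \<le> i \<and> i \<le> n \<longrightarrow> C i * C i = I) \<and>
     (\<forall>i j. 1 \<le> i \<and> i \<le> n \<and> 1 \<le> j \<and> j \<le> n \<longrightarrow> C i * C j = C j * C i) \<and>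
     (\<forall>i j. 1 \<le> i \<and> i \<le> n - 1 \<and> 1 \<le> j \<and> j \<le> n \<and> (i + 2 \<le> j \<or> j + 2 \<le> i)
          \<longrightarrow> C j * B i = B i * C j \<and> C j * A i = A i * C j) \<and>
     (\<forall>i. 1 \<le> i \<and> i \<le> n - 1 \<longrightarrow> B i * C i = C (i+1) * B i) \<and>
     (\<forall>i. 1 \<le> i \<and> i \<le> n - 1 \<longrightarrow> B i * A i * B i = C (i+1) * C i * A i * C i * C (i+1)))"

text \<open>Equivalence: conjugate by a fixed invertible (n+1)x(n+1) matrix P (with inverse Q);
  a homomorphism on TVB_n is determined by its values on generators.\<close>
definition equiv_hlr :: "nat \<Rightarrow> complex mat \<Rightarrow> complex mat \<Rightarrow> complex mat \<Rightarrow>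
    complex mat \<Rightarrow> complex mat \<Rightarrow> complex mat \<Rightarrow> bool" where
  "equiv_hlr n S R G S' R' G' \<longleftrightarrow>
     (\<exists>P Q. P \<in> carrier_mat (n+1) (n+1) \<and> Q \<in> carrier_mat (n+1) (n+1) \<and>
        P * Q = 1\<^sub>m (n+1) \<and> Q * P = 1\<^sub>m (n+1) \<and>
        (\<forall>i. 1 \<le> i \<and> i \<le> n - 1 \<longrightarrow>
             Lmat n i S = P * Lmat n i S' * Q \<and> Lmat n i R = P * Lmat n i R' * Q) \<and>
        (\<forall>j. 1 \<le> j \<and> j \<le> n \<longrightarrow> Lmat n j G = P * Lmat n j G' * Q))"

end

theory Submission
  imports Defs
begin

text \<open>All defining relations that involve only \<open>\<sigma>\<^sub>1, \<sigma>\<^sub>2, \<rho>\<^sub>1, \<rho>\<^sub>2, \<gamma>\<^sub>1, \<gamma>\<^sub>2\<close> are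
  products of matrices that act diagonally outside the leading \<open>3 \<times> 3\<close> block, so (for
  \<open>n \<ge> 3\<close>, where the braid relations at \<open>i = 1\<close> exist) they become polynomial equations in the
  entries of \<open>S, R, G\<close>. The relation \<open>\<rho>\<^sub>1\<gamma>\<^sub>1 = \<gamma>\<^sub>2\<rho>\<^sub>1\<close> together with
  \<open>\<rho>\<^sub>1\<^sup>2 = \<gamma>\<^sub>1\<^sup>2 = 1\<close> forces \<open>G = diag(\<plusminus>1, 1)\<close>; adding the braid relation of the
  \<open>\<rho>\<^sub>i\<close> leaves either \<open>R = G = I\<close> or \<open>R\<close> antidiagonal with entries \<open>x, 1/x\<close>. In the
  first case the mixed relation gives \<open>S = I\<close>. In the second, \<open>\<rho>\<^sub>1\<sigma>\<^sub>1\<rho>\<^sub>1 =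
  \<gamma>\<^sub>2\<gamma>\<^sub>1\<sigma>\<^sub>1\<gamma>\<^sub>1\<gamma>\<^sub>2\<close> becomes \<open>RSR = S\<close>, so \<open>S\<close> has equal diagonal entries and
  off-diagonal entries \<open>x\<^sup>2c, c\<close>; the braid relation of the \<open>\<sigma>\<^sub>i\<close> then leaves \<open>S = I\<close>
  or \<open>S\<close> antidiagonal. So \<open>(S, R, G)\<close> is literally one of the triples (2), (4), (5), (6), (7),
  with the square roots chosen such that \<open>\<surd>b/\<surd>c = x\<close>, and the conjugating matrix is \<open>I\<close>.\<close>

definition mat3 :: "'a \<Rightarrow> 'a \<Rightarrow> 'a \<Rightarrow> 'a \<Rightarrow> 'a \<Rightarrow> 'a \<Rightarrow> 'a \<Rightarrow> 'a \<Rightarrow> 'a \<Rightarrow> 'a mat" where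
  "mat3 a b c d e f g h k = mat_of_rows_list 3 [[a, b, c], [d, e, f], [g, h, k]]"

lemma dim_mat3 [simp]:
  "dim_row (mat3 a b c d e f g h k) = 3" "dim_col (mat3 a b c d e f g h k) = 3"
  by (simp_all add: mat3_def mat_of_rows_list_def)

lemma index_mat3 [simp]:
  "i < 3 \<Longrightarrow> j < 3 \<Longrightarrow> mat3 a b c d e f g h k $$ (i, j) = [[a, b, c], [d, e, f], [g, h, k]] ! i ! j"
  by (simp add: mat3_def mat_of_rows_list_def)

lemma mat3_eq_iff:
  "mat3 a b c d e f g h k = mat3 a' b' c' d' e' f' g' h' k' \<longleftrightarrow>
     a = a' \<and> b = b' \<and> c = c' \<and> d = d' \<and> e = e' \<and> f = f' \<and> g = g' \<and> h = h' \<and> k = k'"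
  by (simp add: mat_eq_iff numeral_3_eq_3 less_Suc_eq all_conj_distrib)

lemma mat3_mult:
  fixes a :: "'a :: semiring_0"
  shows "mat3 a b c d e f g h k * mat3 a' b' c' d' e' f' g' h' k' =
    mat3 (a*a' + b*d' + c*g') (a*b' + b*e' + c*h') (a*c' + b*f' + c*k')
         (d*a' + e*d' + f*g') (d*b' + e*e' + f*h') (d*c' + e*f' + f*k')
         (g*a' + h*d' + k*g') (g*b' + h*e' + k*h') (g*c' + h*f' + k*k')"
  by (rule eq_matI) (auto simp: scalar_prod_def atLeast0LessThan numeral_3_eq_3 less_Suc_eq)

lemma one_mat3: "1\<^sub>m 3 = mat3 1 0 0 0 1 0 0 0 1"
  by (simp add: mat_eq_iff numeral_3_eq_3 less_Suc_eq all_conj_distrib)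

lemma index_mat2 [simp]:
  "i < 2 \<Longrightarrow> j < 2 \<Longrightarrow> mat2 a b c d $$ (i, j) = [[a, b], [c, d]] ! i ! j"
  "dim_row (mat2 a b c d) = 2" "dim_col (mat2 a b c d) = 2"
  by (simp_all add: mat2_def mat_of_rows_list_def)

lemma mat2_eq_iff:
  "mat2 a b c d = mat2 a' b' c' d' \<longleftrightarrow> a = a' \<and> b = b' \<and> c = c' \<and> d = d'"
  by (simp add: mat_eq_iff numeral_2_eq_2 less_Suc_eq all_conj_distrib)

lemma one_mat2: "1\<^sub>m 2 = mat2 1 0 0 1"
  by (simp add: mat_eq_iff numeral_2_eq_2 less_Suc_eq all_conj_distrib)

lemma mat2_cases:
  assumes "M \<in> carrier_mat 2 2"
  obtains a b c d where "M = mat2 a b c d"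
proof
  show "M = mat2 (M $$ (0, 0)) (M $$ (0, 1)) (M $$ (1, 0)) (M $$ (1, 1))"
    using assms by (simp add: mat_eq_iff numeral_2_eq_2 less_Suc_eq)
qed

lemma dim_Lmat [simp]: "dim_row (Lmat n i M) = n + 1" "dim_col (Lmat n i M) = n + 1"
  by (simp_all add: Lmat_def)

lemma Lmat_carrier: "Lmat n i M \<in> carrier_mat (n + 1) (n + 1)"
  by (rule carrier_matI) simp_all

lemma Lmat_1_mat2: "Lmat 2 1 (mat2 a b c d) = mat3 a b 0 c d 0 0 0 1"
  by (simp add: mat_eq_iff Lmat_def mat2_def mat_of_rows_list_def numeral_3_eq_3 less_Suc_eq
      all_conj_distrib)

lemma Lmat_2_mat2: "Lmat 2 2 (mat2 a b c d) = mat3 1 0 0 0 a b 0 c d"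
  by (simp add: mat_eq_iff Lmat_def mat2_def mat_of_rows_list_def numeral_3_eq_3 less_Suc_eq
      all_conj_distrib)

text \<open>The simplifier rewrites \<open>Lmat 2 1\<close> to \<open>Lmat 2 (Suc 0)\<close> before these rules could apply.\<close>
lemmas Lmat_mat3_simps = Lmat_1_mat2[unfolded One_nat_def] Lmat_2_mat2 one_mat3 mat3_mult mat3_eq_iff

definition corner3 :: "'a mat \<Rightarrow> 'a mat" where
  "corner3 X = mat 3 3 (\<lambda>(r, c). X $$ (r, c))"

definition corner3_block_diag :: "nat \<Rightarrow> 'a :: zero mat \<Rightarrow> bool" where
  "corner3_block_diag N X \<longleftrightarrow> X \<in> carrier_mat N N \<and>
     (\<forall>r<N. \<forall>c<N. (3 \<le> r \<or> 3 \<le> c) \<longrightarrow> r \<noteq> c \<longrightarrow> X $$ (r, c) = 0)"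

lemma index_mult_mat_square:
  assumes "X \<in> carrier_mat N N" "Y \<in> carrier_mat N N" "r < N" "c < N"
  shows "(X * Y) $$ (r, c) = (\<Sum>k<N. X $$ (r, k) * Y $$ (k, c))"
  using assms by (simp add: scalar_prod_def lessThan_atLeast0 mult.commute)

lemma corner3_block_diag_mult:
  fixes X Y :: "'a :: semiring_0 mat"
  assumes X: "corner3_block_diag N X" and Y: "corner3_block_diag N Y"
  shows "corner3_block_diag N (X * Y)"
  unfolding corner3_block_diag_def
proof (intro conjI allI impI)
  have carrier: "X \<in> carrier_mat N N" "Y \<in> carrier_mat N N"
    using X Y by (simp_all add: corner3_block_diag_def)
  then show "X * Y \<in> carrier_mat N N" by simp
  fix r c assume rc: "r < N" "c < N" "3 \<le> r \<or> 3 \<le> c" "r \<noteq> c"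
  have "X $$ (r, k) * Y $$ (k, c) = 0" if "k < N" for k
    using X Y rc that unfolding corner3_block_diag_def by (cases "k = r"; cases "k = c") auto
  then show "(X * Y) $$ (r, c) = 0"
    unfolding index_mult_mat_square[OF carrier rc(1,2)] by simp
qed

lemma corner3_mult:
  fixes X Y :: "'a :: semiring_0 mat"
  assumes "3 \<le> dim_row X" "corner3_block_diag (dim_row X) X" "corner3_block_diag (dim_row X) Y"
  shows "corner3 (X * Y) = corner3 X * corner3 Y"
proof (rule eq_matI)
  fix r c assume "r < dim_row (corner3 X * corner3 Y)" "c < dim_col (corner3 X * corner3 Y)"
  then have rc: "r < 3" "c < 3" by (simp_all add: corner3_def)
  have "(X * Y) $$ (r, c) = (\<Sum>k<dim_row X. X $$ (r, k) * Y $$ (k, c))"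
    using assms rc by (simp add: index_mult_mat_square corner3_block_diag_def)
  also have "\<dots> = (\<Sum>k<3. X $$ (r, k) * Y $$ (k, c))"
    using assms rc by (intro sum.mono_neutral_right) (auto simp: corner3_block_diag_def)
  finally show "corner3 (X * Y) $$ (r, c) = (corner3 X * corner3 Y) $$ (r, c)"
    using rc by (simp add: corner3_def scalar_prod_def lessThan_atLeast0 mult.commute)
qed (simp_all add: corner3_def)

text \<open>\<open>Suc n\<close> rather than \<open>n + 1\<close>: the simplifier normalises the dimension to this form.\<close>
lemma corner3_block_diag_Lmat: "i \<le> 2 \<Longrightarrow> corner3_block_diag (Suc n) (Lmat n i M)"
  by (auto simp: corner3_block_diag_def Lmat_def)

lemma corner3_Lmat: "2 \<le> n \<Longrightarrow> corner3 (Lmat n i M) = Lmat 2 i M"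
  by (rule eq_matI) (simp_all add: corner3_def Lmat_def)

lemma corner3_one: "3 \<le> N \<Longrightarrow> corner3 (1\<^sub>m N) = 1\<^sub>m 3"
  by (rule eq_matI) (simp_all add: corner3_def)

lemma homog_local_rep_relations_at_1:
  assumes "3 \<le> n" "homog_local_rep n S R G"
  shows "Lmat n 1 R * Lmat n 1 G = Lmat n 2 G * Lmat n 1 R"
    and "Lmat n 1 G * Lmat n 1 G = 1\<^sub>m (n + 1)"
    and "Lmat n 1 R * Lmat n 1 R = 1\<^sub>m (n + 1)"
    and "Lmat n 1 R * Lmat n 2 R * Lmat n 1 R = Lmat n 2 R * Lmat n 1 R * Lmat n 2 R"
    and "Lmat n 1 S * Lmat n 2 S * Lmat n 1 S = Lmat n 2 S * Lmat n 1 S * Lmat n 2 S"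
    and "Lmat n 1 R * Lmat n 2 R * Lmat n 1 S = Lmat n 2 S * Lmat n 1 R * Lmat n 2 R"
    and "Lmat n 1 R * Lmat n 1 S * Lmat n 1 R =
         Lmat n 2 G * Lmat n 1 G * Lmat n 1 S * Lmat n 1 G * Lmat n 2 G"
  using assms unfolding homog_local_rep_def Let_def
  \<comment> \<open>the quantified relations act as conditional rewrite rules, instantiated at \<open>i = 1\<close>\<close>
  by - (elim conjE, simp add: numeral_2_eq_2)+

lemma homog_local_rep_corner3_relations:
  assumes "3 \<le> n" "homog_local_rep n S R G"
  shows "Lmat 2 1 R * Lmat 2 1 G = Lmat 2 2 G * Lmat 2 1 R"
    and "Lmat 2 1 G * Lmat 2 1 G = 1\<^sub>m 3"
    and "Lmat 2 1 R * Lmat 2 1 R = 1\<^sub>m 3"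
    and "Lmat 2 1 R * Lmat 2 2 R * Lmat 2 1 R = Lmat 2 2 R * Lmat 2 1 R * Lmat 2 2 R"
    and "Lmat 2 1 S * Lmat 2 2 S * Lmat 2 1 S = Lmat 2 2 S * Lmat 2 1 S * Lmat 2 2 S"
    and "Lmat 2 1 R * Lmat 2 2 R * Lmat 2 1 S = Lmat 2 2 S * Lmat 2 1 R * Lmat 2 2 R"
    and "Lmat 2 1 R * Lmat 2 1 S * Lmat 2 1 R =
         Lmat 2 2 G * Lmat 2 1 G * Lmat 2 1 S * Lmat 2 1 G * Lmat 2 2 G"
  using assms(1) homog_local_rep_relations_at_1[OF assms, THEN arg_cong[of _ _ corner3]]
  by (simp_all add: corner3_mult corner3_block_diag_mult corner3_block_diag_Lmat corner3_Lmat
      corner3_one)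

lemma invertible_mat_row_nonzero:
  fixes A :: "'a :: semiring_1 mat"
  assumes "invertible_mat A" "i < dim_row A"
  shows "\<exists>j < dim_col A. A $$ (i, j) \<noteq> 0"
proof (rule ccontr)
  assume "\<not> ?thesis"
  then have row_zero: "A $$ (i, j) = 0" if "j < dim_col A" for j
    using that by auto
  from assms(1) obtain B where AB: "A * B = 1\<^sub>m (dim_row A)" and BA: "B * A = 1\<^sub>m (dim_row B)"
    unfolding invertible_mat_def inverts_mat_def by blast
  have "dim_row B = dim_col A"
    using arg_cong[OF BA, of dim_col] by simp
  moreover have "dim_col B = dim_row A"
    using arg_cong[OF AB, of dim_col] by simp
  ultimately have "(A * B) $$ (i, i) = 0"
    using assms(2) row_zero by (simp add: scalar_prod_def)
  with AB assms(2) show False by simp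
qed

lemma twist_relations_force_G_diagonal:
  assumes twist: "Lmat 2 1 R * Lmat 2 1 G = Lmat 2 2 G * Lmat 2 1 R"
    and R_square: "Lmat 2 1 R * Lmat 2 1 R = 1\<^sub>m 3"
    and G_square: "Lmat 2 1 G * Lmat 2 1 G = 1\<^sub>m 3"
    and R: "R = mat2 r1 r2 r3 r4" and G: "G = mat2 g1 g2 g3 g4"
  shows "G = 1\<^sub>m 2 \<or> G = mat2 (-1) 0 0 1"
proof -
  from twist have "g2 = 0" "g4 = 1" "g3 * r3 = 0" "g3 * r4 = 0"
    by (simp_all add: R G Lmat_mat3_simps)
  moreover from R_square have "r3 * r2 + r4 * r4 = 1"
    by (simp add: R Lmat_mat3_simps)
  ultimately have "g3 = 0" by auto
  moreover from G_square have "g1 * g1 + g2 * g3 = 1"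
    by (simp add: G Lmat_mat3_simps)
  ultimately have "g1 = 1 \<or> g1 = -1"
    using \<open>g2 = 0\<close> by (simp add: square_eq_1_iff)
  then show ?thesis
    using \<open>g2 = 0\<close> \<open>g3 = 0\<close> \<open>g4 = 1\<close> by (auto simp: G one_mat2)
qed

lemma twist_relations_force_R_one_or_antidiagonal:
  assumes twist: "Lmat 2 1 R * Lmat 2 1 G = Lmat 2 2 G * Lmat 2 1 R"
    and R_square: "Lmat 2 1 R * Lmat 2 1 R = 1\<^sub>m 3"
    and R_braid: "Lmat 2 1 R * Lmat 2 2 R * Lmat 2 1 R = Lmat 2 2 R * Lmat 2 1 R * Lmat 2 2 R"
    and G: "G = 1\<^sub>m 2 \<or> G = mat2 (-1) 0 0 1"
    and R: "R = mat2 r1 r2 r3 r4"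
  shows "(R = 1\<^sub>m 2 \<and> G = 1\<^sub>m 2) \<or> (\<exists>x. x \<noteq> 0 \<and> R = mat2 0 x (1 / x) 0)"
proof (cases "r1 = 0 \<and> r4 = 0")
  case True
  with R_square have "r2 * r3 = 1"
    by (simp add: R Lmat_mat3_simps mult.commute)
  then have "r2 \<noteq> 0" by auto
  with \<open>r2 * r3 = 1\<close> have "r3 = 1 / r2" by (simp add: eq_divide_eq mult.commute)
  with True \<open>r2 \<noteq> 0\<close> show ?thesis by (auto simp: R)
next
  case False
  from G obtain g where G_g: "G = mat2 g 0 0 1" and g: "g = 1 \<or> g = -1"
    by (auto simp: one_mat2)
  from twist have "r1 * g = r1" "r4 = g * r4"
    by (simp_all add: R G_g Lmat_mat3_simps)
  with False g have "g = 1" by auto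
  from R_square have R_sq: "r1 * r1 + r2 * r3 = 1" "r2 * (r1 + r4) = 0" "r3 * (r1 + r4) = 0"
      "r3 * r2 + r4 * r4 = 1"
    by (simp_all add: R Lmat_mat3_simps algebra_simps)
  from R_braid have R_br: "r1 * r1 + r1 * r2 * r3 = r1" "r1 * r4 * r4 = r1 * r1 * r4"
    by (simp_all add: R Lmat_mat3_simps algebra_simps)
  have "r1 + r4 \<noteq> 0"
  proof
    assume "r1 + r4 = 0"
    then have "r4 = - r1" by (simp add: add_eq_0_iff2)
    with R_br(2) have "r1 = 0" by simp
    with False \<open>r4 = - r1\<close> show False by simp
  qed
  with R_sq have "r2 = 0" "r3 = 0" by simp_all
  with R_sq R_br have "r1 = 1" "r4 * r4 = 1" by auto
  with \<open>r1 + r4 \<noteq> 0\<close> have "r4 = 1" by (auto simp: square_eq_1_iff)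
  with \<open>r1 = 1\<close> \<open>r2 = 0\<close> \<open>r3 = 0\<close> \<open>g = 1\<close> show ?thesis
    by (simp add: R G_g one_mat2)
qed

lemma mixed_relation_R_one_forces_S_one:
  assumes mixed: "Lmat 2 1 R * Lmat 2 2 R * Lmat 2 1 S = Lmat 2 2 S * Lmat 2 1 R * Lmat 2 2 R"
    and R: "R = 1\<^sub>m 2" and S: "S = mat2 s1 s2 s3 s4"
  shows "S = 1\<^sub>m 2"
  using mixed by (simp add: R S one_mat2 Lmat_mat3_simps mat2_eq_iff)

lemma conjugation_relations_force_S_one_or_antidiagonal:
  assumes conjugation: "Lmat 2 1 R * Lmat 2 1 S * Lmat 2 1 R =
      Lmat 2 2 G * Lmat 2 1 G * Lmat 2 1 S * Lmat 2 1 G * Lmat 2 2 G"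
    and S_braid: "Lmat 2 1 S * Lmat 2 2 S * Lmat 2 1 S = Lmat 2 2 S * Lmat 2 1 S * Lmat 2 2 S"
    and S_inv: "invertible_mat S"
    and R: "R = mat2 0 x y 0" and xy: "x * y = 1"
    and G: "G = 1\<^sub>m 2 \<or> G = mat2 (-1) 0 0 1"
    and S: "S = mat2 s1 s2 s3 s4"
  shows "S = 1\<^sub>m 2 \<or> (\<exists>c. c \<noteq> 0 \<and> S = mat2 0 (x\<^sup>2 * c) c 0)"
proof -
  from G have "Lmat 2 2 G * Lmat 2 1 G * Lmat 2 1 S * Lmat 2 1 G * Lmat 2 2 G = Lmat 2 1 S"
    by (auto simp: S one_mat2 Lmat_mat3_simps)
  with conjugation have "x * s4 * y = s1" "x * s3 * x = s2"
    by (simp_all add: R S Lmat_mat3_simps)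
  with xy have s4: "s4 = s1"
    by (metis mult.assoc mult.commute mult.right_neutral)
  from \<open>x * s3 * x = s2\<close> have s2: "s2 = x\<^sup>2 * s3"
    by (simp add: power2_eq_square ac_simps)
  from xy have "x \<noteq> 0" by auto
  show ?thesis
  proof (cases "s1 = 0")
    case True
    from invertible_mat_row_nonzero[OF S_inv, of 1] obtain j where "j < 2" "S $$ (1, j) \<noteq> 0"
      by (auto simp: S)
    with True s4 have "s3 \<noteq> 0"
      by (auto simp: S less_2_cases_iff)
    with True s4 s2 show ?thesis
      by (auto simp: S)
  next
    case False
    from S_braid s4 have "s1 * s1 + s1 * s2 * s3 = s1" "s1 * s1 * s2 = 0"
      by (simp_all add: S Lmat_mat3_simps algebra_simps)
    with False have "s2 = 0" "s1 = 1" by auto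
    with s4 s2 \<open>x \<noteq> 0\<close> show ?thesis
      by (simp add: S one_mat2)
  qed
qed

lemma exists_sqrt_ratio:
  fixes x c :: complex
  assumes "x \<noteq> 0" "c \<noteq> 0"
  shows "\<exists>sb sc. sb\<^sup>2 = x\<^sup>2 * c \<and> sc\<^sup>2 = c \<and> sb / sc = x \<and> sc / sb = 1 / x"
  using assms by (intro exI[of _ "x * csqrt c"] exI[of _ "csqrt c"]) (simp add: power_mult_distrib)

lemma homog_local_rep_normal_form:
  assumes "3 \<le> n" "homog_local_rep n S R G"
  obtains (one) "S = 1\<^sub>m 2" "R = 1\<^sub>m 2" "G = 1\<^sub>m 2"
    | (S_one) x where "x \<noteq> 0" "S = 1\<^sub>m 2" "R = mat2 0 x (1 / x) 0"
        "G = 1\<^sub>m 2 \<or> G = mat2 (-1) 0 0 1"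
    | (S_antidiagonal) b c sb sc where "b \<noteq> 0" "c \<noteq> 0" "sb\<^sup>2 = b" "sc\<^sup>2 = c"
        "S = mat2 0 b c 0" "R = mat2 0 (sb / sc) (sc / sb) 0" "G = 1\<^sub>m 2 \<or> G = mat2 (-1) 0 0 1"
proof -
  note rels = homog_local_rep_corner3_relations[OF assms]
  from assms(2) have carrier: "S \<in> carrier_mat 2 2" "R \<in> carrier_mat 2 2" "G \<in> carrier_mat 2 2"
    and S_inv: "invertible_mat S"
    by (simp_all add: homog_local_rep_def)
  obtain s1 s2 s3 s4 where S: "S = mat2 s1 s2 s3 s4" using mat2_cases[OF carrier(1)] .
  obtain r1 r2 r3 r4 where R: "R = mat2 r1 r2 r3 r4" using mat2_cases[OF carrier(2)] .
  obtain g1 g2 g3 g4 where G: "G = mat2 g1 g2 g3 g4" using mat2_cases[OF carrier(3)] .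
  have G_cases: "G = 1\<^sub>m 2 \<or> G = mat2 (-1) 0 0 1"
    using rels(1,3,2) R G by (rule twist_relations_force_G_diagonal)
  from twist_relations_force_R_one_or_antidiagonal[OF rels(1,3,4) G_cases R]
  consider (R_one) "R = 1\<^sub>m 2" "G = 1\<^sub>m 2"
    | (R_antidiagonal) x where "x \<noteq> 0" "R = mat2 0 x (1 / x) 0"
    by blast
  then show thesis
  proof cases
    case R_one
    from mixed_relation_R_one_forces_S_one[OF rels(6) R_one(1) S] R_one show thesis
      by (rule one)
  next
    case R_antidiagonal
    with conjugation_relations_force_S_one_or_antidiagonal
      [OF rels(7,5) S_inv R_antidiagonal(2) _ G_cases S]
    consider "S = 1\<^sub>m 2" | c where "c \<noteq> 0" "S = mat2 0 (x\<^sup>2 * c) c 0"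
      by auto
    then show thesis
    proof cases
      case 1
      from R_antidiagonal(1) 1 R_antidiagonal(2) G_cases show thesis
        by (rule S_one)
    next
      case 2
      obtain sb sc where sqrt: "sb\<^sup>2 = x\<^sup>2 * c" "sc\<^sup>2 = c" "sb / sc = x" "sc / sb = 1 / x"
        using exists_sqrt_ratio[OF R_antidiagonal(1) 2(1)] by blast
      show thesis
        using R_antidiagonal 2 sqrt G_cases by (intro S_antidiagonal[of "x\<^sup>2 * c" c sb sc]) simp_all
    qed
  qed
qed

lemma equiv_hlr_refl: "equiv_hlr n S R G S R G"
  unfolding equiv_hlr_def
  by (intro exI[of _ "1\<^sub>m (n + 1)"])
    (simp add: left_mult_one_mat[OF Lmat_carrier] right_mult_one_mat[OF Lmat_carrier]
      del: One_nat_def)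

theorem theorem3p4:
  fixes n :: nat and S R G :: "complex mat"
  assumes "n \<ge> 3" and "homog_local_rep n S R G"
  shows "(\<exists>b c sb sc. b \<noteq> 0 \<and> c \<noteq> 0 \<and> sb^2 = b \<and> sc^2 = c \<and>
            equiv_hlr n S R G (mat2 0 b c 0) (mat2 0 (-(sb/sc)) (-(sc/sb)) 0) (mat2 (-1) 0 0 1))
       \<or> (\<exists>b c sb sc. b \<noteq> 0 \<and> c \<noteq> 0 \<and> sb^2 = b \<and> sc^2 = c \<and>
            equiv_hlr n S R G (mat2 0 b c 0) (mat2 0 (sb/sc) (sc/sb) 0) (mat2 (-1) 0 0 1))
       \<or> (\<exists>b c sb sc. b \<noteq> 0 \<and> c \<noteq> 0 \<and> sb^2 = b \<and> sc^2 = c \<and>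
            equiv_hlr n S R G (mat2 0 b c 0) (mat2 0 (-(sb/sc)) (-(sc/sb)) 0) (1\<^sub>m 2))
       \<or> (\<exists>b c sb sc. b \<noteq> 0 \<and> c \<noteq> 0 \<and> sb^2 = b \<and> sc^2 = c \<and>
            equiv_hlr n S R G (mat2 0 b c 0) (mat2 0 (sb/sc) (sc/sb) 0) (1\<^sub>m 2))
       \<or> (\<exists>x. x \<noteq> 0 \<and> equiv_hlr n S R G (1\<^sub>m 2) (mat2 0 x (1/x) 0) (mat2 (-1) 0 0 1))
       \<or> (\<exists>x. x \<noteq> 0 \<and> equiv_hlr n S R G (1\<^sub>m 2) (mat2 0 x (1/x) 0) (1\<^sub>m 2))
       \<or> equiv_hlr n S R G (1\<^sub>m 2) (1\<^sub>m 2) (1\<^sub>m 2)"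
proof -
  note refl = equiv_hlr_refl[of n S R G]
  from assms show ?thesis
  proof (cases rule: homog_local_rep_normal_form)
    case one
    with refl show ?thesis by simp
  next
    case (S_one x)
    with refl show ?thesis by auto
  next
    case (S_antidiagonal b c sb sc)
    with refl have "\<exists>b c sb sc. b \<noteq> 0 \<and> c \<noteq> 0 \<and> sb\<^sup>2 = b \<and> sc\<^sup>2 = c \<and>
        equiv_hlr n S R G (mat2 0 b c 0) (mat2 0 (sb / sc) (sc / sb) 0) G"
      by (intro exI[of _ b] exI[of _ c] exI[of _ sb] exI[of _ sc]) simp
    with S_antidiagonal(7) show ?thesis by (elim disjE) simp_all
  qed
qed

end
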